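(* Let $n\ge 2$ and $\sigma,\tau\in S_n$. Define $\delta(\sigma,\tau)=|\{x\in\{n-1,\sigma^{-1}(n-1),\tau^{-1}(n-1)\}:\sigma(x)\neq\tau(x)\}|$ and $\delta^{\sf CT}(\sigma,\tau)=|\{x\in\{\sigma^{-1}(n-1),\tau^{-1}(n-1)\}:\sigma^{\sf CT}(x)\neq\tau^{\sf CT}(x)\}|$. Then ${\rm hd}(\sigma,\tau)-{\rm hd}(\sigma^{\sf CT},\tau^{\sf CT})=\delta(\sigma,\tau)-\delta^{\sf CT}(\sigma,\tau)$.
   Context: $S_n$ is the symmetric group on $\{0,1,\ldots,n-1\}$; ${\rm hd}(\sigma,\tau)=|\{x:\sigma(x)\neq\tau(x)\}|$. The contraction of $\sigma\in S_n$ is $\sigma^{\sf CT}\in S_{n-1}$ (on $\{0,\ldots,n-2\}$) defined by $\sigma^{\sf CT}(x)=\sigma(n-1)$ if $x=\sigma^{-1}(n-1)$ and $\sigma^{\sf CT}(x)=\sigma(x)$ otherwise (i.e. delete $n-1$ from the cycle notation of $\sigma$). In the definition of $\delta^{\sf CT}$ only those elements of $\{\sigma^{-1}(n-1),\tau^{-1}(n-1)\}$ lying in $\{0,\ldots,n-2\}$ are considered (the symbol $n-1$ is not in the domain of the contractions). *)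

theory Defs
  imports "HOL-Combinatorics.Permutations"
begin

(* Permutations of {0,...,n-1} are represented as functions nat => nat with
   sigma permutes {..<n} (identity outside). *)

definition hd_dist :: "nat \<Rightarrow> (nat \<Rightarrow> nat) \<Rightarrow> (nat \<Rightarrow> nat) \<Rightarrow> nat" where
  "hd_dist n \<sigma> \<tau> = card {x \<in> {..<n}. \<sigma> x \<noteq> \<tau> x}"

definition contraction :: "nat \<Rightarrow> (nat \<Rightarrow> nat) \<Rightarrow> (nat \<Rightarrow> nat)" where
  "contraction n \<sigma> = (\<lambda>x. if x < n - 1 then
       (if x = inv \<sigma> (n - 1) then \<sigma> (n - 1) else \<sigma> x) else x)"

definition delta :: "nat \<Rightarrow> (nat \<Rightarrow> nat) \<Rightarrow> (nat \<Rightarrow> nat) \<Rightarrow> nat" where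
  "delta n \<sigma> \<tau> = card {x \<in> {n - 1, inv \<sigma> (n - 1), inv \<tau> (n - 1)}. \<sigma> x \<noteq> \<tau> x}"

definition delta_CT :: "nat \<Rightarrow> (nat \<Rightarrow> nat) \<Rightarrow> (nat \<Rightarrow> nat) \<Rightarrow> nat" where
  "delta_CT n \<sigma> \<tau> = card {x \<in> {inv \<sigma> (n - 1), inv \<tau> (n - 1)} \<inter> {..<n - 1}.
      contraction n \<sigma> x \<noteq> contraction n \<tau> x}"

end

theory Submission
  imports Defs
begin

(* The contraction of \<sigma> agrees with \<sigma> everywhere on {0,...,n-2} except at \<sigma>^-1(n-1),
   and the point n-1 drops out of the domain. Hence the disagreement sets of (\<sigma>, \<tau>) and of
   their contractions coincide outside S = {n-1, \<sigma>^-1(n-1), \<tau>^-1(n-1)}, so the difference of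
   the Hamming distances equals the difference of the disagreement counts inside S, which are
   exactly \<delta> and \<delta>^CT. *)

lemma int_card_diff_eq_card_Int_diff:
  assumes "finite A" and "finite B" and "A - S = B - S"
  shows "int (card A) - int (card B) = int (card (A \<inter> S)) - int (card (B \<inter> S))"
proof -
  have "card A = card (A \<inter> S) + card (A - S)" and "card B = card (B \<inter> S) + card (B - S)"
    using card_Int_Diff assms(1,2) by blast+
  then show ?thesis
    using assms(3) by simp
qed

lemma permutes_disagreements_Int:
  assumes "\<sigma> permutes A" and "\<tau> permutes A"
  shows "{x \<in> A. \<sigma> x \<noteq> \<tau> x} \<inter> S = {x \<in> S. \<sigma> x \<noteq> \<tau> x}"
  using assms by auto (metis permutes_not_in)

lemma contraction_apply:
  assumes "x < n - 1" and "x \<noteq> inv \<sigma> (n - 1)"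
  shows "contraction n \<sigma> x = \<sigma> x"
  using assms by (simp add: contraction_def)

lemma disagreements_contraction_Diff:
  fixes n :: nat and \<sigma> \<tau> :: "nat \<Rightarrow> nat"
  defines "S \<equiv> {n - 1, inv \<sigma> (n - 1), inv \<tau> (n - 1)}"
  shows "{x \<in> {..<n}. \<sigma> x \<noteq> \<tau> x} - S
       = {x \<in> {..<n - 1}. contraction n \<sigma> x \<noteq> contraction n \<tau> x} - S"
proof -
  have same_domain: "x < n \<longleftrightarrow> x < n - 1" if "x \<notin> S" for x
    using that unfolding S_def by auto
  have same_values: "contraction n \<sigma> x = \<sigma> x \<and> contraction n \<tau> x = \<tau> x"
    if "x < n - 1" and "x \<notin> S" for x
    using that unfolding S_def by (simp add: contraction_apply)
  show ?thesis
    using same_domain same_values by fastforce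
qed

theorem lemma4p1:
  fixes n :: nat and \<sigma> \<tau> :: "nat \<Rightarrow> nat"
  assumes "n \<ge> 2" and "\<sigma> permutes {..<n}" and "\<tau> permutes {..<n}"
  shows "int (hd_dist n \<sigma> \<tau>) - int (hd_dist (n - 1) (contraction n \<sigma>) (contraction n \<tau>))
         = int (delta n \<sigma> \<tau>) - int (delta_CT n \<sigma> \<tau>)"
proof -
  define S where "S = {n - 1, inv \<sigma> (n - 1), inv \<tau> (n - 1)}"
  define D where "D = {x \<in> {..<n}. \<sigma> x \<noteq> \<tau> x}"
  define D' where "D' = {x \<in> {..<n - 1}. contraction n \<sigma> x \<noteq> contraction n \<tau> x}"
  have "D - S = D' - S"
    unfolding D_def D'_def S_def by (rule disagreements_contraction_Diff)
  then have "int (card D) - int (card D') = int (card (D \<inter> S)) - int (card (D' \<inter> S))"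
    by (intro int_card_diff_eq_card_Int_diff) (simp_all add: D_def D'_def)
  moreover have "D \<inter> S = {x \<in> S. \<sigma> x \<noteq> \<tau> x}"
    unfolding D_def using permutes_disagreements_Int assms(2,3) .
  moreover have "D' \<inter> S = {x \<in> {inv \<sigma> (n - 1), inv \<tau> (n - 1)} \<inter> {..<n - 1}.
      contraction n \<sigma> x \<noteq> contraction n \<tau> x}"
    unfolding D'_def S_def by auto
  ultimately show ?thesis
    unfolding hd_dist_def delta_def delta_CT_def D_def D'_def S_def by simp
qed

end
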